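(* Let $\Lambda=K\mathcal{Q}/I$ be a finite-dimensional algebra over a field $K$ as in the context, let $A\geqslant1$, let $\tilde{\Lambda}=\tilde{\Lambda}_A$ be its stretched algebra and $\varepsilon=\sum_{v\in\mathcal{Q}_0}v\in\tilde{\Lambda}$. For an arrow $\alpha$ of $\mathcal{Q}$ with new vertices $w_1,\dots,w_{A-1}$, let $$X_\alpha=\big(\tilde{\Lambda}w_1\tilde{\Lambda}+\cdots+\tilde{\Lambda}w_{A-1}\tilde{\Lambda}+\tilde{\Lambda}\varepsilon\tilde{\Lambda}\big)/\tilde{\Lambda}\varepsilon\tilde{\Lambda}.$$ Then $\dim_KX_\alpha=A(A-1)/2$, and $\dim_K\tilde{\Lambda}/\langle\varepsilon\rangle=m_1A(A-1)/2$, where $m_1$ is the number of arrows of $\mathcal{Q}$ and $\langle\varepsilon\rangle=\tilde{\Lambda}\varepsilon\tilde{\Lambda}$.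
   Context: Conventions: $\mathcal{Q}$ is a finite quiver with vertex set $\mathcal{Q}_0$; $\mathfrak{o}(\alpha)$, $\mathfrak{t}(\alpha)$ denote start and end of an arrow; paths are written left to right. An element $x\in K\mathcal{Q}$ is uniform if $x=vx=xv'$ for vertices $v,v'$. $\Lambda=K\mathcal{Q}/I$ is finite-dimensional with $I$ an admissible ideal generated by a minimal set $\{g^2_1,\dots,g^2_m\}$ of uniform elements. Stretched algebra: for $A\geqslant1$, the quiver $\tilde{\mathcal{Q}}_A$ has all vertices of $\mathcal{Q}$ plus, for each arrow $\alpha$ of $\mathcal{Q}$, new vertices $w_1,\dots,w_{A-1}$; each arrow $\alpha$ is replaced by arrows $\alpha_1,\dots,\alpha_A$ with $\mathfrak{o}(\alpha_1)=\mathfrak{o}(\alpha)$, $\mathfrak{t}(\alpha_j)=\mathfrak{o}(\alpha_{j+1})=w_j$ ($1\le j\le A-1$), $\mathfrak{t}(\alpha_A)=\mathfrak{t}(\alpha)$, and the only arrows incident with $w_j$ are $\alpha_j,\alpha_{j+1}$. $\theta^*:K\mathcal{Q}\to K\tilde{\mathcal{Q}}_A$ is the algebra homomorphism fixing vertices and sending $\alpha\mapsto\alpha_1\cdots\alpha_A$; $\tilde{I}_A$ is the ideal generated by $\theta^*(g^2_1),\dots,\theta^*(g^2_m)$; $\tilde{\Lambda}_A=K\tilde{\mathcal{Q}}_A/\tilde{I}_A$. *)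

theory Defs
  imports Main
begin

text \<open>Finite quivers given by a vertex set, an arrow set, start and end maps.
  A path is a pair (v, as) of a start vertex and a list of arrows, written
  left to right; (v, []) is the trivial path at v.\<close>

record ('v, 'e) quiver =
  verts :: "'v set"
  arrs  :: "'e set"
  src   :: "'e \<Rightarrow> 'v"
  tgt   :: "'e \<Rightarrow> 'v"

type_synonym ('v, 'e) path = "'v \<times> 'e list"

definition finite_quiver :: "('v, 'e) quiver \<Rightarrow> bool" where
  "finite_quiver Q \<longleftrightarrow> finite (verts Q) \<and> finite (arrs Q) \<and>
     (\<forall>a\<in>arrs Q. src Q a \<in> verts Q \<and> tgt Q a \<in> verts Q)"

fun valid_path :: "('v, 'e) quiver \<Rightarrow> ('v, 'e) path \<Rightarrow> bool" where
  "valid_path Q (v, as) \<longleftrightarrow> v \<in> verts Q \<and> set as \<subseteq> arrs Q \<and>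
     (as \<noteq> [] \<longrightarrow> src Q (hd as) = v) \<and>
     (\<forall>i. Suc i < length as \<longrightarrow> tgt Q (as ! i) = src Q (as ! Suc i))"

fun end_vertex :: "('v, 'e) quiver \<Rightarrow> ('v, 'e) path \<Rightarrow> 'v" where
  "end_vertex Q (v, as) = (if as = [] then v else tgt Q (last as))"

fun path_mult :: "('v, 'e) quiver \<Rightarrow> ('v, 'e) path \<Rightarrow> ('v, 'e) path \<Rightarrow> ('v, 'e) path option" where
  "path_mult Q (v, as) (w, bs) = (if end_vertex Q (v, as) = w then Some (v, as @ bs) else None)"

text \<open>Elements of the path algebra KQ: finitely supported K-valued functions
  on valid paths (coefficient of each path).\<close>

definition supp :: "('p \<Rightarrow> 'k::zero) \<Rightarrow> 'p set" where
  "supp x = {p. x p \<noteq> 0}"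

definition pa_carrier :: "('v, 'e) quiver \<Rightarrow> (('v, 'e) path \<Rightarrow> 'k::zero) set" where
  "pa_carrier Q = {x. finite (supp x) \<and> (\<forall>p. x p \<noteq> 0 \<longrightarrow> valid_path Q p)}"

definition pmult :: "('v, 'e) quiver \<Rightarrow> (('v, 'e) path \<Rightarrow> 'k::comm_ring_1)
    \<Rightarrow> (('v, 'e) path \<Rightarrow> 'k) \<Rightarrow> (('v, 'e) path \<Rightarrow> 'k)" where
  "pmult Q x y = (\<lambda>r. \<Sum>p\<in>supp x. \<Sum>q\<in>supp y.
      if path_mult Q p q = Some r then x p * y q else 0)"

definition padd :: "('p \<Rightarrow> 'k::plus) \<Rightarrow> ('p \<Rightarrow> 'k) \<Rightarrow> ('p \<Rightarrow> 'k)" where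
  "padd x y = (\<lambda>p. x p + y p)"

definition pth :: "('v, 'e) path \<Rightarrow> (('v, 'e) path \<Rightarrow> 'k::{zero,one})" where
  "pth p = (\<lambda>q. if q = p then 1 else 0)"

definition vtx :: "'v \<Rightarrow> (('v, 'e) path \<Rightarrow> 'k::{zero,one})" where
  "vtx v = pth (v, [])"

inductive_set ideal_gen :: "('v, 'e) quiver \<Rightarrow> (('v, 'e) path \<Rightarrow> 'k::comm_ring_1) set
    \<Rightarrow> (('v, 'e) path \<Rightarrow> 'k) set" for Q G where
  zero: "(\<lambda>_. 0) \<in> ideal_gen Q G"
| gen: "g \<in> G \<Longrightarrow> a \<in> pa_carrier Q \<Longrightarrow> b \<in> pa_carrier Q \<Longrightarrow>
        pmult Q (pmult Q a g) b \<in> ideal_gen Q G"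
| add: "x \<in> ideal_gen Q G \<Longrightarrow> y \<in> ideal_gen Q G \<Longrightarrow> padd x y \<in> ideal_gen Q G"

definition arrow_ideal_pow :: "('v, 'e) quiver \<Rightarrow> nat \<Rightarrow> (('v, 'e) path \<Rightarrow> 'k::comm_ring_1) set" where
  "arrow_ideal_pow Q n = ideal_gen Q {pth p | p. valid_path Q p \<and> length (snd p) = n}"

definition admissible :: "('v, 'e) quiver \<Rightarrow> (('v, 'e) path \<Rightarrow> 'k::comm_ring_1) set \<Rightarrow> bool" where
  "admissible Q I \<longleftrightarrow> (\<exists>N\<ge>2. arrow_ideal_pow Q N \<subseteq> I \<and> I \<subseteq> arrow_ideal_pow Q 2)"

definition uniform :: "('v, 'e) quiver \<Rightarrow> (('v, 'e) path \<Rightarrow> 'k::comm_ring_1) \<Rightarrow> bool" where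
  "uniform Q x \<longleftrightarrow> (\<exists>v\<in>verts Q. \<exists>v'\<in>verts Q. x = pmult Q (vtx v) x \<and> x = pmult Q x (vtx v'))"

text \<open>K-linear combinations and dimension of a quotient space U/W (W \<subseteq> U subspaces
  of KQ): U/W has dimension d iff there are d elements of U whose classes form a
  basis of U/W.\<close>
definition lin_comb :: "(nat \<Rightarrow> 'k::comm_ring_1) \<Rightarrow> ('p \<Rightarrow> 'k) list \<Rightarrow> ('p \<Rightarrow> 'k)" where
  "lin_comb c xs = (\<lambda>p. \<Sum>i<length xs. c i * (xs ! i) p)"

definition has_qdim :: "('p \<Rightarrow> 'k::field) set \<Rightarrow> ('p \<Rightarrow> 'k) set \<Rightarrow> nat \<Rightarrow> bool" where
  "has_qdim U W d \<longleftrightarrow> (\<exists>xs. length xs = d \<and> set xs \<subseteq> U \<and>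
      (\<forall>c. lin_comb c xs \<in> W \<longrightarrow> (\<forall>i<d. c i = 0)) \<and>
      (\<forall>u\<in>U. \<exists>c w. w \<in> W \<and> u = padd (lin_comb c xs) w))"

text \<open>The stretched quiver: old vertices Inl v, new vertices w_j of arrow \<alpha> are
  Inr (\<alpha>, j) for 1 \<le> j \<le> A-1; the new arrows \<alpha>_j are (\<alpha>, j), 1 \<le> j \<le> A.\<close>
definition stretch :: "('v, 'e) quiver \<Rightarrow> nat \<Rightarrow> ('v + 'e \<times> nat, 'e \<times> nat) quiver" where
  "stretch Q A = \<lparr> verts = Inl ` verts Q \<union> {Inr (\<alpha>, j) | \<alpha> j. \<alpha> \<in> arrs Q \<and> 1 \<le> j \<and> j \<le> A - 1},
     arrs = {(\<alpha>, j) | \<alpha> j. \<alpha> \<in> arrs Q \<and> 1 \<le> j \<and> j \<le> A},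
     src = (\<lambda>(\<alpha>, j). if j = 1 then Inl (src Q \<alpha>) else Inr (\<alpha>, j - 1)),
     tgt = (\<lambda>(\<alpha>, j). if j = A then Inl (tgt Q \<alpha>) else Inr (\<alpha>, j)) \<rparr>"

fun theta_path :: "nat \<Rightarrow> ('v, 'e) path \<Rightarrow> ('v + 'e \<times> nat, 'e \<times> nat) path" where
  "theta_path A (v, as) = (Inl v, concat (map (\<lambda>\<alpha>. map (\<lambda>j. (\<alpha>, j)) [1..<A + 1]) as))"

text \<open>theta*: the algebra homomorphism KQ \<rightarrow> KQ~ fixing vertices, \<alpha> \<mapsto> \<alpha>_1...\<alpha>_A
  (extended linearly from paths).\<close>
definition theta :: "nat \<Rightarrow> (('v, 'e) path \<Rightarrow> 'k::comm_ring_1)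
    \<Rightarrow> (('v + 'e \<times> nat, 'e \<times> nat) path \<Rightarrow> 'k)" where
  "theta A x = (\<lambda>q. \<Sum>p\<in>supp x. if theta_path A p = q then x p else 0)"

definition eps :: "('v, 'e) quiver \<Rightarrow> (('v + 'e \<times> nat, 'e \<times> nat) path \<Rightarrow> 'k::comm_ring_1)" where
  "eps Q = (\<lambda>p. \<Sum>v\<in>verts Q. vtx (Inl v) p)"

end

theory Submission
  imports Defs
begin

text \<open>In the path algebra of a quiver, let an ideal be generated by elements supported on
  paths through a vertex set \<open>S\<close>, including for each \<open>s \<in> S\<close> a sum of vertex idempotents
  containing \<open>e\<^sub>s\<close>. Since every path through \<open>s\<close> factors as \<open>p\<^sub>1 e\<^sub>s p\<^sub>2\<close>, this ideal is the
  span of the paths through \<open>S\<close>, and the quotient by it has the paths avoiding \<open>S\<close> as a basis.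

  Every path \<open>\<theta>*(p)\<close> starts at an old vertex. The paths of the stretched quiver avoiding the old vertices
  are the segments \<open>w\<^sub>i \<rightarrow> \<dots> \<rightarrow> w\<^sub>i\<^sub>+\<^sub>n\<close> of a single chain with \<open>1 \<le> i \<le> i + n \<le> A - 1\<close>,
  \<open>A(A - 1)/2\<close> of them per arrow, and \<open>X\<^sub>\<alpha>\<close> has as basis those in the chain of \<open>\<alpha>\<close>.\<close>

section \<open>Paths\<close>

definition path_verts :: "('v, 'e) quiver \<Rightarrow> ('v, 'e) path \<Rightarrow> 'v set" where
  "path_verts Q p = insert (fst p) (tgt Q ` set (snd p))"

lemma path_mult_SomeD:
  "path_mult Q p q = Some r \<Longrightarrow> r = (fst p, snd p @ snd q) \<and> end_vertex Q p = fst q"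
  by (cases p; cases q) (auto split: if_splits)

lemma path_verts_path_mult:
  assumes "path_mult Q p q = Some r"
  shows "path_verts Q p \<union> path_verts Q q \<subseteq> path_verts Q r"
proof -
  obtain v as w bs where pq: "p = (v, as)" "q = (w, bs)" by (cases p; cases q)
  with assms have "r = (v, as @ bs)" "w = end_vertex Q (v, as)"
    by (auto split: if_splits)
  with pq show ?thesis by (auto simp: path_verts_def)
qed

lemma valid_path_Cons:
  assumes "\<forall>a\<in>arrs Q. tgt Q a \<in> verts Q"
  shows "valid_path Q (v, a # as) \<longleftrightarrow>
    v \<in> verts Q \<and> a \<in> arrs Q \<and> src Q a = v \<and> valid_path Q (tgt Q a, as)"
  using assms by (auto simp: nth_Cons hd_conv_nth split: nat.splits)

lemma valid_path_Nil [simp]: "valid_path Q (v, []) \<longleftrightarrow> v \<in> verts Q"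
  by simp

declare valid_path.simps [simp del]

lemma valid_path_append:
  assumes "\<forall>a\<in>arrs Q. tgt Q a \<in> verts Q"
    and "valid_path Q (v, as)" "valid_path Q (w, bs)" "end_vertex Q (v, as) = w"
  shows "valid_path Q (v, as @ bs)"
  using assms(2-)
proof (induction as arbitrary: v)
  case Nil
  then show ?case by simp
next
  case (Cons a as)
  then show ?case by (cases as) (auto simp: valid_path_Cons[OF assms(1)])
qed

lemma path_verts_subset_verts:
  assumes "\<forall>a\<in>arrs Q. tgt Q a \<in> verts Q" and "valid_path Q p"
  shows "path_verts Q p \<subseteq> verts Q"
  using assms by (cases p) (auto simp: path_verts_def valid_path.simps)

lemma valid_path_split:
  assumes tgt_closed: "\<forall>a\<in>arrs Q. tgt Q a \<in> verts Q"
    and "valid_path Q p" "u \<in> path_verts Q p"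
  obtains p1 p2 where "valid_path Q p1" "valid_path Q p2"
    "path_mult Q p1 p2 = Some p" "end_vertex Q p1 = u"
proof -
  obtain v as where p: "p = (v, as)" by (cases p)
  have "\<exists>p1 p2. valid_path Q p1 \<and> valid_path Q p2 \<and> path_mult Q p1 p2 = Some (v, as) \<and>
      end_vertex Q p1 = u"
    if "valid_path Q (v, as)" "u \<in> path_verts Q (v, as)" for v as
    using that
  proof (induction as arbitrary: v)
    case Nil
    then show ?case by (auto simp: path_verts_def)
  next
    case (Cons a as)
    show ?case
    proof (cases "u = v")
      case True
      with Cons.prems show ?thesis
        by (intro exI[of _ "(v, [])"] exI[of _ "(v, a # as)"]) (simp add: valid_path.simps)
    next
      case False
      with Cons.prems have "valid_path Q (tgt Q a, as)" "u \<in> path_verts Q (tgt Q a, as)"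
        by (auto simp: valid_path_Cons[OF tgt_closed] path_verts_def)
      then obtain p1 p2 where "valid_path Q p1" "valid_path Q p2"
        "path_mult Q p1 p2 = Some (tgt Q a, as)" "end_vertex Q p1 = u"
        using Cons.IH by blast
      with Cons.prems show ?thesis
        by (intro exI[of _ "(v, a # snd p1)"] exI[of _ p2], cases p1, cases p2)
          (auto simp: valid_path_Cons[OF tgt_closed] split: if_splits)
    qed
  qed
  with assms p that show ?thesis by blast
qed

section \<open>The path algebra\<close>

definition monom :: "'k::zero \<Rightarrow> 'p \<Rightarrow> ('p \<Rightarrow> 'k)" where
  "monom c p = (\<lambda>r. if r = p then c else 0)"

lemma monom_apply: "monom c p r = (if r = p then c else 0)"
  by (simp add: monom_def)

lemma monom_zero [simp]: "monom 0 p = (\<lambda>_. 0)"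
  by (simp add: monom_def)

definition vertex_sum :: "'v set \<Rightarrow> (('v, 'e) path \<Rightarrow> 'k::{zero,one})" where
  "vertex_sum V = (\<lambda>p. if snd p = [] \<and> fst p \<in> V then 1 else 0)"

lemma vertex_sum_apply: "vertex_sum V p = (if snd p = [] \<and> fst p \<in> V then 1 else 0)"
  by (simp add: vertex_sum_def)

lemma pa_carrierI:
  "finite (supp x) \<Longrightarrow> (\<And>p. x p \<noteq> 0 \<Longrightarrow> valid_path Q p) \<Longrightarrow> x \<in> pa_carrier Q"
  by (simp add: pa_carrier_def)

lemma pa_carrierD:
  assumes "x \<in> pa_carrier Q"
  shows "finite (supp x)" and "x p \<noteq> 0 \<Longrightarrow> valid_path Q p"
  using assms unfolding pa_carrier_def by blast+

lemma pmult_nonzeroE: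
  assumes "pmult Q x y r \<noteq> (0::'k::comm_ring_1)"
  obtains p q where "x p \<noteq> 0" "y q \<noteq> 0" "path_mult Q p q = Some r"
proof -
  from assms obtain p where
    "(\<Sum>q\<in>supp y. if path_mult Q p q = Some r then x p * y q else 0) \<noteq> 0"
    unfolding pmult_def by (rule sum.not_neutral_contains_not_neutral)
  then obtain q where "(if path_mult Q p q = Some r then x p * y q else 0) \<noteq> 0"
    by (rule sum.not_neutral_contains_not_neutral)
  then show thesis using that[of p q] by (auto dest: mult_not_zero split: if_splits)
qed

lemma pmult_carrier:
  fixes x y :: "('v, 'e) path \<Rightarrow> 'k::comm_ring_1"
  assumes x: "x \<in> pa_carrier Q" and y: "y \<in> pa_carrier Q"
    and tgt_closed: "\<forall>a\<in>arrs Q. tgt Q a \<in> verts Q"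
  shows "pmult Q x y \<in> pa_carrier Q"
proof -
  have "supp (pmult Q x y) \<subseteq> (\<lambda>(p, q). (fst p, snd p @ snd q)) ` (supp x \<times> supp y)"
  proof
    fix r assume "r \<in> supp (pmult Q x y)"
    then have "pmult Q x y r \<noteq> 0" by (simp add: supp_def)
    then obtain p q where "x p \<noteq> 0" "y q \<noteq> 0" "path_mult Q p q = Some r"
      by (rule pmult_nonzeroE)
    then show "r \<in> (\<lambda>(p, q). (fst p, snd p @ snd q)) ` (supp x \<times> supp y)"
      by (force simp: supp_def dest: path_mult_SomeD)
  qed
  moreover have "finite (supp x \<times> supp y)" using pa_carrierD(1)[OF x] pa_carrierD(1)[OF y] by simp
  ultimately have "finite (supp (pmult Q x y))" by (meson finite_imageI finite_subset)
  moreover have "valid_path Q r" if "pmult Q x y r \<noteq> 0" for r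
  proof -
    obtain p q where "x p \<noteq> 0" "y q \<noteq> 0" and pq: "path_mult Q p q = Some r"
      using \<open>pmult Q x y r \<noteq> 0\<close> by (rule pmult_nonzeroE)
    with x y have "valid_path Q p" "valid_path Q q" by (blast dest: pa_carrierD(2))+
    with path_mult_SomeD[OF pq] show ?thesis
      using valid_path_append[OF tgt_closed, of "fst p" "snd p" "fst q" "snd q"] by simp
  qed
  ultimately show ?thesis by (rule pa_carrierI)
qed

lemma supp_monom: "supp (monom c p) = (if c = 0 then {} else {p})"
  by (auto simp: supp_def monom_apply)

lemma monom_carrier: "valid_path Q p \<Longrightarrow> monom c p \<in> pa_carrier Q"
  by (auto simp: pa_carrier_def supp_monom monom_apply)

lemma pth_eq_monom: "pth p = monom 1 p"
  by (simp add: pth_def monom_def)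

lemma pmult_monom_left:
  "pmult Q (monom c p) y r =
    (\<Sum>q\<in>supp y. if path_mult Q p q = Some r then c * y q else (0::'k::comm_ring_1))"
  by (cases "c = 0") (simp_all add: pmult_def supp_monom monom_apply cong: if_cong)

lemma pmult_monom_monom:
  "pmult Q (monom c p) (monom d q) =
    (case path_mult Q p q of None \<Rightarrow> (\<lambda>_. 0) | Some r \<Rightarrow> monom (c * d) r)"
  by (rule ext) (simp add: pmult_monom_left supp_monom monom_apply split: option.split)

lemma supp_vertex_sum: "supp (vertex_sum V :: _ \<Rightarrow> 'k::zero_neq_one) = (\<lambda>v. (v, [])) ` V"
  by (auto simp: supp_def vertex_sum_apply)

lemma pmult_monom_vertex_sum:
  assumes "finite V" "end_vertex Q p \<in> V"
  shows "pmult Q (monom c p) (vertex_sum V) = (monom c p :: _ \<Rightarrow> 'k::comm_ring_1)"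
proof
  fix r
  obtain v as where p: "p = (v, as)" by (cases p)
  have "pmult Q (monom c p) (vertex_sum V) r =
      (\<Sum>u\<in>V. if end_vertex Q p = u then monom c p r else 0)"
    unfolding pmult_monom_left supp_vertex_sum
    by (subst sum.reindex) (auto simp: inj_on_def p monom_apply vertex_sum_apply intro!: sum.cong)
  also have "\<dots> = monom c p r" using assms by simp
  finally show "pmult Q (monom c p) (vertex_sum V) r = monom c p r" .
qed

lemma finite_support_closure:
  fixes J :: "('p \<Rightarrow> 'k::monoid_add) set"
  assumes zero: "(\<lambda>_. 0) \<in> J"
    and add: "\<And>x y. x \<in> J \<Longrightarrow> y \<in> J \<Longrightarrow> padd x y \<in> J"
    and monom: "\<And>p c. P p \<Longrightarrow> monom c p \<in> J"
    and "finite (supp x)" "\<And>p. x p \<noteq> 0 \<Longrightarrow> P p"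
  shows "x \<in> J"
  using assms(4,5)
proof (induction "supp x" arbitrary: x rule: finite_induct)
  case empty
  then have "x = (\<lambda>_. 0)" by (auto simp: supp_def)
  with zero show ?case by simp
next
  case (insert p F)
  have "F = supp (x(p := 0))" using insert.hyps(2,4) by (auto simp: supp_def)
  moreover have "P q" if "(x(p := 0)) q \<noteq> 0" for q
    using that insert.prems by (auto split: if_splits)
  ultimately have "x(p := 0) \<in> J" by (rule insert.hyps(3))
  moreover have "monom (x p) p \<in> J"
    using insert.prems monom zero by (cases "x p = 0") (auto simp: monom_apply)
  ultimately have "padd (x(p := 0)) (monom (x p) p) \<in> J" by (rule add)
  moreover have "padd (x(p := 0)) (monom (x p) p) = x"
    by (auto simp: padd_def monom_apply)
  ultimately show ?case by simp
qed

section \<open>Ideals spanned by the paths through a set of vertices\<close>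

definition vertex_ideal :: "('v, 'e) quiver \<Rightarrow> 'v set \<Rightarrow> (('v, 'e) path \<Rightarrow> 'k::zero) set" where
  "vertex_ideal Q S = {x \<in> pa_carrier Q. \<forall>p. x p \<noteq> 0 \<longrightarrow> path_verts Q p \<inter> S \<noteq> {}}"

lemma vertex_idealI:
  "x \<in> pa_carrier Q \<Longrightarrow> (\<And>p. x p \<noteq> 0 \<Longrightarrow> path_verts Q p \<inter> S \<noteq> {}) \<Longrightarrow> x \<in> vertex_ideal Q S"
  by (simp add: vertex_ideal_def)

lemma vertex_idealD:
  assumes "x \<in> vertex_ideal Q S"
  shows "x \<in> pa_carrier Q" and "x p \<noteq> 0 \<Longrightarrow> path_verts Q p \<inter> S \<noteq> {}"
  using assms unfolding vertex_ideal_def by blast+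

lemma vertex_ideal_mono: "S \<subseteq> S' \<Longrightarrow> vertex_ideal Q S \<subseteq> vertex_ideal Q S'"
  unfolding vertex_ideal_def by blast

lemma vertex_ideal_zero: "(\<lambda>_. 0) \<in> vertex_ideal Q S"
  by (simp add: vertex_ideal_def pa_carrier_def supp_def)

lemma vertex_ideal_padd:
  fixes x y :: "('v, 'e) path \<Rightarrow> 'k::monoid_add"
  assumes x: "x \<in> vertex_ideal Q S" and y: "y \<in> vertex_ideal Q S"
  shows "padd x y \<in> vertex_ideal Q S"
proof (rule vertex_idealI)
  have nz: "x p \<noteq> 0 \<or> y p \<noteq> 0" if "padd x y p \<noteq> 0" for p
    using that by (auto simp: padd_def)
  have "supp (padd x y) \<subseteq> supp x \<union> supp y" using nz by (auto simp: supp_def)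
  moreover have "finite (supp x)" "finite (supp y)"
    using x y by (blast dest: vertex_idealD pa_carrierD)+
  ultimately have "finite (supp (padd x y))" by (simp add: finite_subset)
  then show "padd x y \<in> pa_carrier Q"
    using nz x y by (blast intro: pa_carrierI dest: vertex_idealD pa_carrierD)
  show "path_verts Q p \<inter> S \<noteq> {}" if "padd x y p \<noteq> 0" for p
    using nz[OF that] vertex_idealD(2)[OF x] vertex_idealD(2)[OF y] by blast
qed

lemma vertex_ideal_pmult:
  fixes x y :: "('v, 'e) path \<Rightarrow> 'k::comm_ring_1"
  assumes tgt_closed: "\<forall>a\<in>arrs Q. tgt Q a \<in> verts Q"
    and "x \<in> pa_carrier Q" "y \<in> pa_carrier Q"
    and "x \<in> vertex_ideal Q S \<or> y \<in> vertex_ideal Q S"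
  shows "pmult Q x y \<in> vertex_ideal Q S"
proof (rule vertex_idealI)
  show "pmult Q x y \<in> pa_carrier Q" using assms(2,3) tgt_closed by (rule pmult_carrier)
  fix r assume "pmult Q x y r \<noteq> 0"
  then obtain p q where "x p \<noteq> 0" "y q \<noteq> 0" and pq: "path_mult Q p q = Some r"
    by (rule pmult_nonzeroE)
  then have "path_verts Q p \<inter> S \<noteq> {} \<or> path_verts Q q \<inter> S \<noteq> {}"
    using assms(4) vertex_idealD(2) by blast
  then show "path_verts Q r \<inter> S \<noteq> {}" using path_verts_path_mult[OF pq] by blast
qed

lemma ideal_gen_subset_vertex_ideal:
  assumes tgt_closed: "\<forall>a\<in>arrs Q. tgt Q a \<in> verts Q"
    and "Gs \<subseteq> vertex_ideal Q S"
  shows "ideal_gen Q Gs \<subseteq> vertex_ideal Q S"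
proof
  fix x assume "x \<in> ideal_gen Q Gs"
  then show "x \<in> vertex_ideal Q S"
  proof induction
    case zero
    show ?case by (rule vertex_ideal_zero)
  next
    case (gen g a b)
    then have g: "g \<in> vertex_ideal Q S" using assms(2) by blast
    have ag: "pmult Q a g \<in> vertex_ideal Q S"
      using vertex_ideal_pmult[OF tgt_closed gen.hyps(2) vertex_idealD(1)[OF g]] g by blast
    show ?case
      using vertex_ideal_pmult[OF tgt_closed vertex_idealD(1)[OF ag] gen.hyps(3)] ag by blast
  next
    case (add x y)
    from add.IH show ?case by (rule vertex_ideal_padd)
  qed
qed

lemma vertex_sum_in_vertex_ideal:
  assumes "finite V" "V \<subseteq> verts Q \<inter> S"
  shows "(vertex_sum V :: _ \<Rightarrow> 'k::zero_neq_one) \<in> vertex_ideal Q S"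
proof (rule vertex_idealI)
  show "(vertex_sum V :: _ \<Rightarrow> 'k) \<in> pa_carrier Q"
    using assms by (intro pa_carrierI) (auto simp: supp_vertex_sum vertex_sum_apply split: if_splits)
  show "path_verts Q p \<inter> S \<noteq> {}" if "(vertex_sum V :: _ \<Rightarrow> 'k) p \<noteq> 0" for p
    using that assms by (auto simp: vertex_sum_apply path_verts_def split: if_splits)
qed

lemma vertex_ideal_subset_ideal_gen:
  fixes Gs :: "(('v, 'e) path \<Rightarrow> 'k::comm_ring_1) set"
  assumes tgt_closed: "\<forall>a\<in>arrs Q. tgt Q a \<in> verts Q"
    and sums: "\<forall>s\<in>S \<inter> verts Q. \<exists>V. finite V \<and> s \<in> V \<and> vertex_sum V \<in> Gs"
  shows "vertex_ideal Q S \<subseteq> ideal_gen Q Gs"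
proof
  fix x :: "('v, 'e) path \<Rightarrow> 'k" assume x: "x \<in> vertex_ideal Q S"
  show "x \<in> ideal_gen Q Gs"
  proof (rule finite_support_closure)
    show "(\<lambda>_. 0) \<in> ideal_gen Q Gs" by (rule ideal_gen.zero)
    show "padd y z \<in> ideal_gen Q Gs" if "y \<in> ideal_gen Q Gs" "z \<in> ideal_gen Q Gs" for y z
      using that by (rule ideal_gen.add)
    show "finite (supp x)" using x by (blast dest: vertex_idealD pa_carrierD)
  next
    fix p assume "x p \<noteq> 0"
    with x show "valid_path Q p \<and> path_verts Q p \<inter> S \<noteq> {}"
      by (blast dest: vertex_idealD pa_carrierD)
  next
    fix p c assume p: "valid_path Q p \<and> path_verts Q p \<inter> S \<noteq> {}"
    then obtain s where s: "s \<in> path_verts Q p" "s \<in> S" by blast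
    with p have "s \<in> verts Q" using path_verts_subset_verts[OF tgt_closed] by blast
    with s sums obtain V where V: "finite V" "s \<in> V" "vertex_sum V \<in> Gs" by blast
    obtain p1 p2 where p12: "valid_path Q p1" "valid_path Q p2"
      "path_mult Q p1 p2 = Some p" "end_vertex Q p1 = s"
      using valid_path_split[OF tgt_closed] p s(1) by blast
    have "pmult Q (pmult Q (monom c p1) (vertex_sum V)) (monom 1 p2) \<in> ideal_gen Q Gs"
      by (intro ideal_gen.gen V(3) monom_carrier p12(1,2))
    moreover have "pmult Q (pmult Q (monom c p1) (vertex_sum V)) (monom 1 p2) = monom c p"
      using V p12 by (simp add: pmult_monom_vertex_sum pmult_monom_monom)
    ultimately show "monom c p \<in> ideal_gen Q Gs" by simp
  qed
qed

lemma ideal_gen_eq_vertex_ideal: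
  fixes Gs :: "(('v, 'e) path \<Rightarrow> 'k::comm_ring_1) set"
  assumes "\<forall>a\<in>arrs Q. tgt Q a \<in> verts Q"
    and "Gs \<subseteq> vertex_ideal Q S"
    and "\<forall>s\<in>S \<inter> verts Q. \<exists>V. finite V \<and> s \<in> V \<and> vertex_sum V \<in> Gs"
  shows "ideal_gen Q Gs = vertex_ideal Q S"
  by (intro equalityI ideal_gen_subset_vertex_ideal vertex_ideal_subset_ideal_gen assms)

lemma pa_carrier_eq_vertex_ideal_UNIV: "pa_carrier Q = vertex_ideal Q UNIV"
  by (auto simp: vertex_ideal_def path_verts_def)

lemma lin_comb_pth_nth:
  assumes "distinct ps" "k < length ps"
  shows "lin_comb c (map pth ps) (ps ! k) = (c k :: 'k::comm_ring_1)"
proof -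
  have "lin_comb c (map pth ps) (ps ! k) = (\<Sum>i<length ps. if i = k then c i else 0)"
    unfolding lin_comb_def
    using assms by (intro sum.cong) (auto simp: pth_def nth_eq_iff_index_eq)
  also have "\<dots> = c k" using assms(2) by simp
  finally show ?thesis .
qed

lemma lin_comb_pth_notin:
  "r \<notin> set ps \<Longrightarrow> lin_comb c (map pth ps) r = (0 :: 'k::comm_ring_1)"
  unfolding lin_comb_def by (intro sum.neutral) (auto simp: pth_def)

lemma has_qdim_coordinates:
  fixes U W :: "(('v, 'e) path \<Rightarrow> 'k::field) set"
  assumes "finite P"
    and basis: "\<And>p. p \<in> P \<Longrightarrow> pth p \<in> U"
    and vanish: "\<And>w p. w \<in> W \<Longrightarrow> p \<in> P \<Longrightarrow> w p = 0"
    and rest: "\<And>u. u \<in> U \<Longrightarrow> (\<lambda>r. if r \<in> P then 0 else u r) \<in> W"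
  shows "has_qdim U W (card P)"
proof -
  obtain ps where ps: "P = set ps" "distinct ps"
    using finite_distinct_list[OF assms(1)] by metis
  have len: "length (map pth ps) = card P" using ps by (simp add: distinct_card)
  have "set (map pth ps) \<subseteq> U" using ps basis by auto
  moreover have "\<forall>i<card P. c i = 0" if "lin_comb c (map pth ps) \<in> W" for c
  proof (intro allI impI)
    fix i assume "i < card P"
    then have i: "i < length ps" using len by simp
    then have "ps ! i \<in> P" using ps(1) nth_mem by blast
    then have "lin_comb c (map pth ps) (ps ! i) = 0" using vanish that by blast
    then show "c i = 0" using lin_comb_pth_nth[OF ps(2) i, of c] by simp
  qed
  moreover have "\<exists>c w. w \<in> W \<and> u = padd (lin_comb c (map pth ps)) w" if "u \<in> U" for u
  proof (intro exI conjI)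
    show "(\<lambda>r. if r \<in> P then 0 else u r) \<in> W" using that by (rule rest)
    show "u = padd (lin_comb (\<lambda>i. u (ps ! i)) (map pth ps)) (\<lambda>r. if r \<in> P then 0 else u r)"
    proof
      fix r
      show "u r = padd (lin_comb (\<lambda>i. u (ps ! i)) (map pth ps)) (\<lambda>r. if r \<in> P then 0 else u r) r"
      proof (cases "r \<in> set ps")
        case True
        then obtain k where "k < length ps" "r = ps ! k" by (auto simp: in_set_conv_nth)
        with ps show ?thesis by (simp add: padd_def lin_comb_pth_nth)
      next
        case False
        with ps show ?thesis by (simp add: padd_def lin_comb_pth_notin)
      qed
    qed
  qed
  ultimately show ?thesis unfolding has_qdim_def using len by blast
qed

lemma has_qdim_vertex_ideal:
  fixes Q :: "('v, 'e) quiver" and S S' :: "'v set"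
  defines "P \<equiv> {p. valid_path Q p \<and> path_verts Q p \<inter> S' \<noteq> {} \<and> path_verts Q p \<inter> S = {}}"
  assumes "finite P"
  shows "has_qdim (vertex_ideal Q S' :: (_ \<Rightarrow> 'k::field) set) (vertex_ideal Q S) (card P)"
proof (rule has_qdim_coordinates)
  show "pth p \<in> vertex_ideal Q S'" if "p \<in> P" for p
    using that monom_carrier[of Q p 1]
    by (intro vertex_idealI) (auto simp: P_def pth_eq_monom monom_apply split: if_splits)
  show "w p = 0" if "w \<in> vertex_ideal Q S" "p \<in> P" for w :: "_ \<Rightarrow> 'k" and p
    using that vertex_idealD(2) unfolding P_def by blast
  show "(\<lambda>r. if r \<in> P then 0 else u r) \<in> vertex_ideal Q S" if u: "u \<in> vertex_ideal Q S'"
    for u :: "_ \<Rightarrow> 'k"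
  proof (intro vertex_idealI pa_carrierI)
    have "supp (\<lambda>r. if r \<in> P then 0 else u r) \<subseteq> supp u" by (auto simp: supp_def)
    then show "finite (supp (\<lambda>r. if r \<in> P then 0 else u r))"
      using u by (meson finite_subset pa_carrierD(1) vertex_idealD(1))
    fix r assume "(if r \<in> P then 0 else u r) \<noteq> 0"
    then have "r \<notin> P" "u r \<noteq> 0" by (auto split: if_splits)
    moreover have "valid_path Q r" using \<open>u r \<noteq> 0\<close> u by (blast dest: vertex_idealD pa_carrierD)
    ultimately show "valid_path Q r" "path_verts Q r \<inter> S \<noteq> {}"
      using vertex_idealD(2)[OF u] unfolding P_def by blast+
  qed
qed (rule assms(2))

section \<open>The stretched quiver\<close>

definition stretch_node :: "('v, 'e) quiver \<Rightarrow> nat \<Rightarrow> 'e \<Rightarrow> nat \<Rightarrow> 'v + 'e \<times> nat" where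
  "stretch_node Q A \<alpha> k =
    (if k = 0 then Inl (src Q \<alpha>) else if k = A then Inl (tgt Q \<alpha>) else Inr (\<alpha>, k))"

definition stretch_segment ::
    "('v, 'e) quiver \<Rightarrow> nat \<Rightarrow> 'e \<Rightarrow> nat \<Rightarrow> nat \<Rightarrow> ('v + 'e \<times> nat, 'e \<times> nat) path" where
  "stretch_segment Q A \<alpha> i n = (stretch_node Q A \<alpha> i, map (\<lambda>k. (\<alpha>, k)) [Suc i..<Suc i + n])"

definition inner_segment_index :: "nat \<Rightarrow> (nat \<times> nat) set" where
  "inner_segment_index A = {(i, n). 1 \<le> i \<and> i + n < A}"

lemma src_stretch: "1 \<le> k \<Longrightarrow> k \<le> A \<Longrightarrow> src (stretch Q A) (\<alpha>, k) = stretch_node Q A \<alpha> (k - 1)"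
  by (auto simp: stretch_def stretch_node_def)

lemma tgt_stretch: "1 \<le> k \<Longrightarrow> tgt (stretch Q A) (\<alpha>, k) = stretch_node Q A \<alpha> k"
  by (simp add: stretch_def stretch_node_def)

lemma arrs_stretch: "(\<alpha>, k) \<in> arrs (stretch Q A) \<longleftrightarrow> \<alpha> \<in> arrs Q \<and> 1 \<le> k \<and> k \<le> A"
  by (simp add: stretch_def)

lemma Inl_in_verts_stretch: "Inl v \<in> verts (stretch Q A) \<longleftrightarrow> v \<in> verts Q"
  by (auto simp: stretch_def)

lemma Inr_in_verts_stretch: "Inr (\<alpha>, k) \<in> verts (stretch Q A) \<longleftrightarrow> \<alpha> \<in> arrs Q \<and> 1 \<le> k \<and> k < A"
  by (auto simp: stretch_def)

lemma stretch_node_interior: "0 < k \<Longrightarrow> k < A \<Longrightarrow> stretch_node Q A \<alpha> k = Inr (\<alpha>, k)"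
  by (simp add: stretch_node_def)

lemma stretch_node_in_verts:
  assumes "finite_quiver Q" "\<alpha> \<in> arrs Q" "k \<le> A"
  shows "stretch_node Q A \<alpha> k \<in> verts (stretch Q A)"
  using assms
  by (auto simp: stretch_node_def finite_quiver_def Inl_in_verts_stretch Inr_in_verts_stretch)

lemma tgt_closed_stretch:
  assumes "finite_quiver Q"
  shows "\<forall>a\<in>arrs (stretch Q A). tgt (stretch Q A) a \<in> verts (stretch Q A)"
  using assms by (auto simp: arrs_stretch tgt_stretch stretch_node_in_verts)

lemma fst_stretch_segment: "fst (stretch_segment Q A \<alpha> i n) = stretch_node Q A \<alpha> i"
  by (simp add: stretch_segment_def)

lemma length_stretch_segment: "length (snd (stretch_segment Q A \<alpha> i n)) = n"
  by (simp add: stretch_segment_def del: upt_Suc)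

lemma stretch_segment_Suc:
  "stretch_segment Q A \<alpha> i (Suc n) =
    (stretch_node Q A \<alpha> i, (\<alpha>, Suc i) # snd (stretch_segment Q A \<alpha> (Suc i) n))"
  by (simp add: stretch_segment_def upt_conv_Cons del: upt_Suc)

lemma valid_stretch_segment:
  assumes "finite_quiver Q" "\<alpha> \<in> arrs Q" "i + n \<le> A"
  shows "valid_path (stretch Q A) (stretch_segment Q A \<alpha> i n)"
  using assms(3)
proof (induction n arbitrary: i)
  case 0
  then show ?case
    using stretch_node_in_verts[OF assms(1,2)] by (simp add: stretch_segment_def)
next
  case (Suc n)
  then have "valid_path (stretch Q A) (stretch_segment Q A \<alpha> (Suc i) n)" by simp
  then have "valid_path (stretch Q A) (stretch_node Q A \<alpha> (Suc i), snd (stretch_segment Q A \<alpha> (Suc i) n))"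
    by (metis fst_stretch_segment prod.collapse)
  with Suc.prems show ?case
    using stretch_node_in_verts[OF assms(1,2)] assms(2)
    unfolding stretch_segment_Suc valid_path_Cons[OF tgt_closed_stretch[OF assms(1)]]
    by (simp add: arrs_stretch src_stretch tgt_stretch)
qed

lemma end_vertex_stretch_segment:
  "end_vertex (stretch Q A) (stretch_segment Q A \<alpha> i n) = stretch_node Q A \<alpha> (i + n)"
  by (cases n) (simp_all add: stretch_segment_def tgt_stretch last_map)

lemma path_verts_stretch_segment:
  "path_verts (stretch Q A) (stretch_segment Q A \<alpha> i n) = stretch_node Q A \<alpha> ` {i..i + n}"
proof -
  have "tgt (stretch Q A) ` set (snd (stretch_segment Q A \<alpha> i n)) =
      stretch_node Q A \<alpha> ` {Suc i..i + n}"
    by (force simp: stretch_segment_def tgt_stretch image_iff)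
  moreover have "{i..i + n} = insert i {Suc i..i + n}" by auto
  ultimately show ?thesis by (simp only: path_verts_def fst_stretch_segment image_insert)
qed

lemma theta_path_Cons:
  "theta_path A (v, \<alpha> # as) =
    (Inl v, snd (stretch_segment Q A \<alpha> 0 A) @ snd (theta_path A (tgt Q \<alpha>, as)))"
  by (simp add: stretch_segment_def)

lemma valid_theta_path:
  assumes fq: "finite_quiver Q" and A: "1 \<le> A" and "valid_path Q p"
  shows "valid_path (stretch Q A) (theta_path A p)"
proof -
  have tgt_closed: "\<forall>a\<in>arrs Q. tgt Q a \<in> verts Q" using fq by (simp add: finite_quiver_def)
  obtain v as where p: "p = (v, as)" by (cases p)
  have "valid_path (stretch Q A) (theta_path A (v, as))" if "valid_path Q (v, as)" for v as
    using that
  proof (induction as arbitrary: v)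
    case Nil
    then show ?case by (simp add: Inl_in_verts_stretch)
  next
    case (Cons \<alpha> as)
    then have \<alpha>: "\<alpha> \<in> arrs Q" "src Q \<alpha> = v" and "valid_path Q (tgt Q \<alpha>, as)"
      by (simp_all add: valid_path_Cons[OF tgt_closed])
    then have theta: "valid_path (stretch Q A) (Inl (tgt Q \<alpha>), snd (theta_path A (tgt Q \<alpha>, as)))"
      using Cons.IH by simp
    have "valid_path (stretch Q A) (Inl v, snd (stretch_segment Q A \<alpha> 0 A))"
      using valid_stretch_segment[OF fq \<alpha>(1), of 0 A] \<alpha>(2)
      by (simp add: stretch_segment_def stretch_node_def)
    moreover note theta
    moreover have "end_vertex (stretch Q A) (Inl v, snd (stretch_segment Q A \<alpha> 0 A)) = Inl (tgt Q \<alpha>)"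
      using end_vertex_stretch_segment[of Q A \<alpha> 0 A] \<alpha>(2) A
      by (simp add: stretch_segment_def stretch_node_def)
    ultimately show ?case
      unfolding theta_path_Cons[of A v \<alpha> as Q]
      by (rule valid_path_append[OF tgt_closed_stretch[OF fq]])
  qed
  with assms(3) p show ?thesis by simp
qed

lemma theta_in_vertex_ideal:
  fixes g :: "('v, 'e) path \<Rightarrow> 'k::comm_ring_1"
  assumes fq: "finite_quiver Q" and A: "1 \<le> A" and g: "g \<in> pa_carrier Q"
  shows "theta A g \<in> vertex_ideal (stretch Q A) (range Inl)"
proof -
  have preimage: "\<exists>p. g p \<noteq> 0 \<and> theta_path A p = q" if "theta A g q \<noteq> 0" for q
  proof -
    from that obtain p where "(if theta_path A p = q then g p else 0) \<noteq> 0"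
      unfolding theta_def by (rule sum.not_neutral_contains_not_neutral)
    then have "g p \<noteq> 0" "theta_path A p = q" by (simp_all split: if_splits)
    then show ?thesis by blast
  qed
  show ?thesis
  proof (intro vertex_idealI pa_carrierI)
    have "supp (theta A g) \<subseteq> theta_path A ` supp g"
      using preimage unfolding supp_def by blast
    then show "finite (supp (theta A g))"
      using pa_carrierD(1)[OF g] by (simp add: finite_subset)
  next
    fix q assume "theta A g q \<noteq> 0"
    then obtain p where "g p \<noteq> 0" and q: "theta_path A p = q" using preimage by blast
    then show "valid_path (stretch Q A) q"
      using valid_theta_path[OF fq A] pa_carrierD(2)[OF g] by blast
    have "fst q \<in> range Inl" using q by (cases p) auto
    then show "path_verts (stretch Q A) q \<inter> range Inl \<noteq> {}" by (auto simp: path_verts_def)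
  qed
qed

lemma eps_eq_vertex_sum:
  fixes Q :: "('v, 'e) quiver"
  assumes "finite (verts Q)"
  shows "eps Q = vertex_sum (Inl ` verts Q)"
proof
  fix p :: "('v + 'e \<times> nat, 'e \<times> nat) path"
  show "eps Q p = vertex_sum (Inl ` verts Q) p"
    using assms
    by (cases p) (auto simp: eps_def vtx_def pth_def vertex_sum_apply intro!: sum.neutral)
qed

lemma vtx_eq_vertex_sum: "vtx v = vertex_sum {v}"
  by (auto simp: vtx_def pth_def vertex_sum_def)

lemma ideal_gen_stretch:
  fixes G :: "(('v, 'e) path \<Rightarrow> 'k::comm_ring_1) set"
  assumes fq: "finite_quiver Q" and A: "1 \<le> A" and G: "G \<subseteq> pa_carrier Q"
    and W: "W \<subseteq> verts (stretch Q A)"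
  shows "ideal_gen (stretch Q A) (theta A ` G \<union> {eps Q} \<union> vtx ` W) =
    vertex_ideal (stretch Q A) (range Inl \<union> W)"
proof (rule ideal_gen_eq_vertex_ideal[OF tgt_closed_stretch[OF fq]])
  have fin: "finite (verts Q)" using fq by (simp add: finite_quiver_def)
  have "theta A ` G \<subseteq> vertex_ideal (stretch Q A) (range Inl \<union> W)"
    using theta_in_vertex_ideal[OF fq A] G vertex_ideal_mono[of "range Inl" "range Inl \<union> W"]
    by blast
  moreover have "eps Q \<in> vertex_ideal (stretch Q A) (range Inl \<union> W)"
    unfolding eps_eq_vertex_sum[OF fin]
    using fin by (intro vertex_sum_in_vertex_ideal) (auto simp: Inl_in_verts_stretch)
  moreover have "(vtx w :: _ \<Rightarrow> 'k) \<in> vertex_ideal (stretch Q A) (range Inl \<union> W)" if "w \<in> W" for w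
    unfolding vtx_eq_vertex_sum using that W by (intro vertex_sum_in_vertex_ideal) auto
  ultimately show "theta A ` G \<union> {eps Q} \<union> vtx ` W \<subseteq> vertex_ideal (stretch Q A) (range Inl \<union> W)"
    by blast
  show "\<forall>s\<in>(range Inl \<union> W) \<inter> verts (stretch Q A). \<exists>V. finite V \<and> s \<in> V \<and>
      vertex_sum V \<in> theta A ` G \<union> {eps Q} \<union> vtx ` W"
  proof
    fix s assume s: "s \<in> (range Inl \<union> W) \<inter> verts (stretch Q A)"
    show "\<exists>V. finite V \<and> s \<in> V \<and> vertex_sum V \<in> theta A ` G \<union> {eps Q} \<union> vtx ` W"
    proof (cases "s \<in> W")
      case True
      then show ?thesis by (intro exI[of _ "{s}"]) (simp add: vtx_eq_vertex_sum)
    next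
      case False
      with s have "s \<in> Inl ` verts Q" by (auto simp: Inl_in_verts_stretch)
      with fin show ?thesis
        by (intro exI[of _ "Inl ` verts Q"]) (simp add: eps_eq_vertex_sum)
    qed
  qed
qed

lemma path_verts_inner_segment:
  assumes "(i, n) \<in> inner_segment_index A"
  shows "path_verts (stretch Q A) (stretch_segment Q A \<alpha> i n) = (\<lambda>k. Inr (\<alpha>, k)) ` {i..i + n}"
  unfolding path_verts_stretch_segment
  using assms by (intro image_cong) (auto simp: inner_segment_index_def stretch_node_interior)

lemma path_avoiding_Inl_eq_segment:
  assumes fq: "finite_quiver Q"
    and "valid_path (stretch Q A) (Inr (\<alpha>, i), as)"
    and "path_verts (stretch Q A) (Inr (\<alpha>, i), as) \<inter> range Inl = {}"
  shows "(Inr (\<alpha>, i), as) = stretch_segment Q A \<alpha> i (length as) \<and>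
    (i, length as) \<in> inner_segment_index A"
  using assms(2,3)
proof (induction as arbitrary: i)
  case Nil
  then show ?case
    by (auto simp: Inr_in_verts_stretch stretch_segment_def stretch_node_def inner_segment_index_def)
next
  case (Cons b as)
  let ?S = "stretch Q A"
  obtain \<beta> j where b: "b = (\<beta>, j)" by (cases b)
  from Cons.prems(1) have i: "\<alpha> \<in> arrs Q" "1 \<le> i" "i < A"
    and "b \<in> arrs ?S" "src ?S b = Inr (\<alpha>, i)" and tail: "valid_path ?S (tgt ?S b, as)"
    by (simp_all add: valid_path_Cons[OF tgt_closed_stretch[OF fq]] Inr_in_verts_stretch)
  then have j: "\<beta> = \<alpha>" "j = Suc i"
    using b by (auto simp: arrs_stretch src_stretch stretch_node_def split: if_splits)
  have "tgt ?S b \<notin> range Inl" using Cons.prems(2) by (auto simp: path_verts_def)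
  then have tgt: "tgt ?S b = Inr (\<alpha>, Suc i)"
    using b j by (auto simp: tgt_stretch stretch_node_def split: if_splits)
  have "path_verts ?S (Inr (\<alpha>, Suc i), as) \<inter> range Inl = {}"
    using Cons.prems(2) tgt by (auto simp: path_verts_def)
  with tail tgt Cons.IH have "snd (stretch_segment Q A \<alpha> (Suc i) (length as)) = as"
    "(Suc i, length as) \<in> inner_segment_index A"
    by (metis snd_conv)+
  then show ?case
    using b j i by (simp add: stretch_segment_Suc stretch_node_interior inner_segment_index_def)
qed

lemma paths_avoiding_Inl_stretch:
  assumes fq: "finite_quiver Q"
  shows "{p. valid_path (stretch Q A) p \<and> path_verts (stretch Q A) p \<inter> range Inl = {}} =
    (\<lambda>(\<alpha>, i, n). stretch_segment Q A \<alpha> i n) ` (arrs Q \<times> inner_segment_index A)"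
proof (intro equalityI subsetI)
  fix p assume "p \<in> {p. valid_path (stretch Q A) p \<and> path_verts (stretch Q A) p \<inter> range Inl = {}}"
  then have valid: "valid_path (stretch Q A) p"
    and avoid: "path_verts (stretch Q A) p \<inter> range Inl = {}" by simp_all
  obtain x as where p: "p = (x, as)" by (cases p)
  have "x \<in> verts (stretch Q A)" "x \<notin> range Inl"
    using path_verts_subset_verts[OF tgt_closed_stretch[OF fq] valid] avoid p
    by (auto simp: path_verts_def)
  then obtain \<alpha> i where x: "x = Inr (\<alpha>, i)" "\<alpha> \<in> arrs Q"
    by (cases x) (auto simp: Inr_in_verts_stretch)
  with path_avoiding_Inl_eq_segment[OF fq] valid avoid p
  have "p = stretch_segment Q A \<alpha> i (length as)" "(i, length as) \<in> inner_segment_index A"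
    by blast+
  with x show "p \<in> (\<lambda>(\<alpha>, i, n). stretch_segment Q A \<alpha> i n) ` (arrs Q \<times> inner_segment_index A)"
    by force
next
  fix p assume "p \<in> (\<lambda>(\<alpha>, i, n). stretch_segment Q A \<alpha> i n) ` (arrs Q \<times> inner_segment_index A)"
  then obtain \<alpha> i n where \<alpha>: "\<alpha> \<in> arrs Q" and idx: "(i, n) \<in> inner_segment_index A"
    and p: "p = stretch_segment Q A \<alpha> i n" by auto
  then show "p \<in> {p. valid_path (stretch Q A) p \<and> path_verts (stretch Q A) p \<inter> range Inl = {}}"
    using valid_stretch_segment[OF fq \<alpha>, of i n] path_verts_inner_segment[OF idx, of Q \<alpha>]
    by (auto simp: inner_segment_index_def)
qed

lemma stretch_segment_inject:
  assumes "stretch_segment Q A \<alpha> i n = stretch_segment Q A \<beta> j m"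
    and "(i, n) \<in> inner_segment_index A" "(j, m) \<in> inner_segment_index A"
  shows "\<alpha> = \<beta> \<and> i = j \<and> n = m"
proof -
  from assms(1) have "stretch_node Q A \<alpha> i = stretch_node Q A \<beta> j"
    by (metis fst_stretch_segment)
  with assms(2,3) have "\<alpha> = \<beta>" "i = j"
    by (auto simp: inner_segment_index_def stretch_node_interior)
  moreover from assms(1) have "n = m"
    by (metis length_stretch_segment)
  ultimately show ?thesis by simp
qed

lemma inj_on_stretch_segment:
  "inj_on (\<lambda>(\<alpha>, i, n). stretch_segment Q A \<alpha> i n) (X \<times> inner_segment_index A)"
  by (auto simp: inj_on_def dest: stretch_segment_inject)

lemma finite_inner_segment_index: "finite (inner_segment_index A)"
  by (rule finite_subset[of _ "{..A} \<times> {..A}"]) (auto simp: inner_segment_index_def)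

lemma card_inner_segment_index: "2 * card (inner_segment_index A) = A * (A - 1)"
proof (induction A)
  case 0
  then show ?case by (simp add: inner_segment_index_def)
next
  case (Suc A)
  have split: "inner_segment_index (Suc A) = inner_segment_index A \<union> (\<lambda>i. (i, A - i)) ` {1..A}"
    by (auto simp: inner_segment_index_def image_iff)
  have "inner_segment_index A \<inter> (\<lambda>i. (i, A - i)) ` {1..A} = {}"
    by (auto simp: inner_segment_index_def)
  moreover have "card ((\<lambda>i. (i, A - i)) ` {1..A}) = A"
    by (subst card_image) (auto simp: inj_on_def)
  ultimately have "card (inner_segment_index (Suc A)) = card (inner_segment_index A) + A"
    unfolding split by (simp add: card_Un_disjoint finite_inner_segment_index)
  with Suc.IH show ?case by (cases A) simp_all
qed

lemma has_qdim_stretch: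
  assumes fq: "finite_quiver Q"
  shows "has_qdim (pa_carrier (stretch Q A) :: (_ \<Rightarrow> 'k::field) set)
    (vertex_ideal (stretch Q A) (range Inl)) (card (arrs Q) * card (inner_segment_index A))"
proof -
  let ?S = "stretch Q A"
  let ?P = "(\<lambda>(\<alpha>, i, n). stretch_segment Q A \<alpha> i n) ` (arrs Q \<times> inner_segment_index A)"
  have "path_verts ?S p \<inter> UNIV \<noteq> {}" for p by (simp add: path_verts_def)
  then have P: "{p. valid_path ?S p \<and> path_verts ?S p \<inter> UNIV \<noteq> {} \<and> path_verts ?S p \<inter> range Inl = {}} = ?P"
    using paths_avoiding_Inl_stretch[OF fq] by simp
  have fin: "finite (arrs Q \<times> inner_segment_index A)"
    using fq finite_inner_segment_index by (simp add: finite_quiver_def)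
  have "card ?P = card (arrs Q) * card (inner_segment_index A)"
    by (simp add: card_image[OF inj_on_stretch_segment] card_cartesian_product)
  with has_qdim_vertex_ideal[of ?S UNIV "range Inl"] fin show ?thesis
    unfolding P pa_carrier_eq_vertex_ideal_UNIV by simp
qed

lemma paths_through_chain_stretch:
  fixes A :: nat
  assumes fq: "finite_quiver Q" and \<alpha>: "\<alpha> \<in> arrs Q"
  defines "W \<equiv> {Inr (\<alpha>, j) | j. 1 \<le> j \<and> j \<le> A - 1}"
  shows "{p. valid_path (stretch Q A) p \<and> path_verts (stretch Q A) p \<inter> (range Inl \<union> W) \<noteq> {} \<and>
      path_verts (stretch Q A) p \<inter> range Inl = {}} =
    (\<lambda>(i, n). stretch_segment Q A \<alpha> i n) ` inner_segment_index A"
  (is "?L = ?R")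
proof (intro equalityI subsetI)
  let ?S = "stretch Q A"
  fix p assume "p \<in> ?L"
  then have avoid: "p \<in> {p. valid_path ?S p \<and> path_verts ?S p \<inter> range Inl = {}}"
    and meet: "path_verts ?S p \<inter> W \<noteq> {}" by blast+
  from avoid obtain \<beta> i n where idx: "(i, n) \<in> inner_segment_index A"
    and p: "p = stretch_segment Q A \<beta> i n"
    unfolding paths_avoiding_Inl_stretch[OF fq] by auto
  from meet have "\<beta> = \<alpha>" unfolding p path_verts_inner_segment[OF idx] W_def by blast
  with idx p show "p \<in> ?R" by blast
next
  let ?S = "stretch Q A"
  fix p assume "p \<in> ?R"
  then obtain i n where idx: "(i, n) \<in> inner_segment_index A"
    and p: "p = stretch_segment Q A \<alpha> i n" by auto
  have "p \<in> (\<lambda>(\<alpha>, i, n). stretch_segment Q A \<alpha> i n) ` (arrs Q \<times> inner_segment_index A)"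
    unfolding p using \<alpha> idx by (intro image_eqI[where x = "(\<alpha>, i, n)"]) simp_all
  then have "p \<in> {p. valid_path ?S p \<and> path_verts ?S p \<inter> range Inl = {}}"
    unfolding paths_avoiding_Inl_stretch[OF fq] .
  moreover have "Inr (\<alpha>, i) \<in> path_verts ?S p \<inter> W"
    using idx unfolding p path_verts_inner_segment[OF idx] W_def
    by (auto simp: inner_segment_index_def)
  ultimately show "p \<in> ?L" by blast
qed

lemma has_qdim_stretch_arrow:
  assumes fq: "finite_quiver Q" and \<alpha>: "\<alpha> \<in> arrs Q"
  shows "has_qdim
    (vertex_ideal (stretch Q A) (range Inl \<union> {Inr (\<alpha>, j) | j. 1 \<le> j \<and> j \<le> A - 1}) :: (_ \<Rightarrow> 'k::field) set)
    (vertex_ideal (stretch Q A) (range Inl)) (card (inner_segment_index A))"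
proof -
  let ?W = "{Inr (\<alpha>, j) | j. 1 \<le> j \<and> j \<le> A - 1}"
  have "inj_on (\<lambda>(i, n). stretch_segment Q A \<alpha> i n) (inner_segment_index A)"
    by (auto simp: inj_on_def dest: stretch_segment_inject)
  then have "card ((\<lambda>(i, n). stretch_segment Q A \<alpha> i n) ` inner_segment_index A) =
      card (inner_segment_index A)"
    by (rule card_image)
  with has_qdim_vertex_ideal[of "stretch Q A" "range Inl \<union> ?W" "range Inl"]
    paths_through_chain_stretch[OF fq \<alpha>] finite_inner_segment_index
  show ?thesis by simp
qed

theorem proposition2p3:
  fixes Q :: "('v, 'e) quiver"
    and G :: "(('v, 'e) path \<Rightarrow> 'k::field) set"
    and I :: "(('v, 'e) path \<Rightarrow> 'k) set"
    and A :: nat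
  assumes fq: "finite_quiver Q"
    and G_car: "G \<subseteq> pa_carrier Q"
    and G_fin: "finite G"
    and G_unif: "\<forall>g\<in>G. uniform Q g"
    and I_gen: "I = ideal_gen Q G"
    and G_min: "\<forall>G'. G' \<subset> G \<longrightarrow> ideal_gen Q G' \<noteq> I"
    and adm: "admissible Q I"
    and fd: "\<exists>d. has_qdim (pa_carrier Q) I d"
    and A: "A \<ge> 1"
  shows "(\<forall>\<alpha>\<in>arrs Q.
           has_qdim
             (ideal_gen (stretch Q A)
                (theta A ` G \<union> {eps Q} \<union> {vtx (Inr (\<alpha>, j)) | j. 1 \<le> j \<and> j \<le> A - 1}))
             (ideal_gen (stretch Q A) (theta A ` G \<union> {eps Q}))
             (A * (A - 1) div 2))
       \<and> has_qdim (pa_carrier (stretch Q A))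
             (ideal_gen (stretch Q A) (theta A ` G \<union> {eps Q}))
             (card (arrs Q) * A * (A - 1) div 2)"
proof -
  let ?S = "stretch Q A" and ?W = "\<lambda>\<alpha>. {Inr (\<alpha>, j) | j. 1 \<le> j \<and> j \<le> A - 1}"
  have J: "ideal_gen ?S (theta A ` G \<union> {eps Q}) = vertex_ideal ?S (range Inl)"
    using ideal_gen_stretch[OF fq A G_car, of "{}"] by simp
  have U: "ideal_gen ?S (theta A ` G \<union> {eps Q} \<union> {vtx (Inr (\<alpha>, j)) | j. 1 \<le> j \<and> j \<le> A - 1}) =
      vertex_ideal ?S (range Inl \<union> ?W \<alpha>)" if "\<alpha> \<in> arrs Q" for \<alpha>
  proof -
    have vtx: "{vtx (Inr (\<alpha>, j)) | j. 1 \<le> j \<and> j \<le> A - 1} = vtx ` ?W \<alpha>" by blast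
    have "?W \<alpha> \<subseteq> verts ?S" using that by (auto simp: Inr_in_verts_stretch)
    then show ?thesis unfolding vtx by (rule ideal_gen_stretch[OF fq A G_car])
  qed
  have card: "2 * card (inner_segment_index A) = A * (A - 1)"
    by (rule card_inner_segment_index)
  then have idx: "A * (A - 1) div 2 = card (inner_segment_index A)" by simp
  from card have arrs:
    "card (arrs Q) * A * (A - 1) div 2 = card (arrs Q) * card (inner_segment_index A)"
    by (metis mult.assoc mult.left_commute nonzero_mult_div_cancel_left zero_neq_numeral)
  have "has_qdim
      (ideal_gen ?S (theta A ` G \<union> {eps Q} \<union> {vtx (Inr (\<alpha>, j)) | j. 1 \<le> j \<and> j \<le> A - 1}))
      (ideal_gen ?S (theta A ` G \<union> {eps Q})) (A * (A - 1) div 2)" if "\<alpha> \<in> arrs Q" for \<alpha>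
    unfolding U[OF that] J idx by (rule has_qdim_stretch_arrow[OF fq that])
  moreover have "has_qdim (pa_carrier ?S) (ideal_gen ?S (theta A ` G \<union> {eps Q}))
      (card (arrs Q) * A * (A - 1) div 2)"
    unfolding J arrs by (rule has_qdim_stretch[OF fq])
  ultimately show ?thesis by blast
qed

end
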